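(* For every integer $n\geq 1$, $$F_n(x):=\sum_{k\geq 0} a(n,k)\,x^k=\prod_{i=0}^{n-1}\left(1+x^{2^i}+x^{2\cdot 2^i}\right).$$
   Context: Stern's triangle is the array of integers $a(n,k)$, $n\geq 0$, $k\in\mathbb{Z}$, defined as follows. Row $n$ consists of the entries $a(n,0),\dots,a(n,N_n)$ with $N_n=2^{n+1}-2$, and $a(n,k)=0$ if $k<0$ or $k>N_n$. Row $0$ is the single entry $a(0,0)=1$. Row $n+1$ is obtained from row $n$ (with $N=N_n$) by $a(n+1,0)=1$, $a(n+1,2j+1)=a(n,j)$ for $0\leq j\leq N$, $a(n+1,2j+2)=a(n,j)+a(n,j+1)$ for $0\leq j\leq N-1$, and $a(n+1,2N+2)=1$. In words: each entry of row $n$ is copied directly below into row $n+1$, the sum of each two consecutive entries of row $n$ is placed between them in row $n+1$, and row $n+1$ begins and ends with $1$. The first rows are $1$; $1,1,1$; $1,1,2,1,2,1,1$; $1,1,2,1,3,2,3,1,3,2,3,1,2,1,1$. *)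

theory Defs
  imports "HOL-Computational_Algebra.Polynomial"
begin

fun stern_mid :: "nat list \<Rightarrow> nat list" where
  "stern_mid [] = []"
| "stern_mid [x] = [x]"
| "stern_mid (x # y # ys) = x # (x + y) # stern_mid (y # ys)"

fun stern_row :: "nat \<Rightarrow> nat list" where
  "stern_row 0 = [1]"
| "stern_row (Suc n) = 1 # stern_mid (stern_row n) @ [1]"

definition stern_a :: "nat \<Rightarrow> nat \<Rightarrow> nat" where
  "stern_a n k = (if k < length (stern_row n) then stern_row n ! k else 0)"

end

theory Submission
  imports Defs
begin

text \<open>In row \<open>n+1\<close> the odd-indexed entries are
  the entries of row \<open>n\<close> and the even-indexed ones are sums \<open>a(n,j-1) + a(n,j)\<close> of
  neighbours (the boundary 1s fit this pattern, as rows begin and end with 1). Hence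
  \<open>F\<^sub>n\<^sub>+\<^sub>1(x) = x F\<^sub>n(x\<^sup>2) + (1 + x\<^sup>2) F\<^sub>n(x\<^sup>2) = (1 + x + x\<^sup>2) F\<^sub>n(x\<^sup>2)\<close>, and
  iterating from \<open>F\<^sub>0 = 1\<close> gives the product.\<close>

lemma length_stern_mid: "length (stern_mid xs) = 2 * length xs - 1"
  by (induction xs rule: stern_mid.induct) auto

lemma horner_sum_stern_mid:
  fixes x :: "'a :: comm_semiring_1"
  assumes "xs \<noteq> []"
  shows "horner_sum of_nat x (hd xs # stern_mid xs @ [last xs])
           = (1 + x + x^2) * horner_sum of_nat (x^2) xs"
  using assms
proof (induction xs rule: stern_mid.induct)
  case (3 y z zs)
  have "horner_sum of_nat x (y # stern_mid (y # z # zs) @ [last (y # z # zs)])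
      = (1 + x + x^2) * of_nat y
        + x^2 * horner_sum of_nat x (z # stern_mid (z # zs) @ [last (z # zs)])"
    by (simp add: algebra_simps power2_eq_square)
  also have "\<dots> = (1 + x + x^2) * horner_sum of_nat (x^2) (y # z # zs)"
    using "3.IH" by (simp add: algebra_simps)
  finally show ?case by simp
qed (simp_all add: algebra_simps power2_eq_square)

lemma stern_row_hd_last: "stern_row n \<noteq> [] \<and> hd (stern_row n) = 1 \<and> last (stern_row n) = 1"
  by (cases n) auto

lemma stern_row_Suc_hd_last:
  "stern_row (Suc n) = hd (stern_row n) # stern_mid (stern_row n) @ [last (stern_row n)]"
  using stern_row_hd_last by simp

lemma length_stern_row_Suc: "length (stern_row (Suc n)) = 2 * length (stern_row n) + 1"
  using stern_row_hd_last[of n] by (simp add: length_stern_mid)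

lemma Suc_length_stern_row: "Suc (length (stern_row n)) = 2^(n+1)"
  by (induction n) (simp_all add: length_stern_row_Suc del: stern_row.simps(2))

lemma horner_sum_stern_row:
  fixes x :: "'a :: comm_semiring_1"
  shows "horner_sum of_nat x (stern_row n) = (\<Prod>i<n. 1 + x ^ (2^i) + x ^ (2 * 2^i))"
proof (induction n arbitrary: x)
  case (Suc n)
  have "horner_sum of_nat x (stern_row (Suc n)) = (1 + x + x^2) * horner_sum of_nat (x^2) (stern_row n)"
    unfolding stern_row_Suc_hd_last using stern_row_hd_last horner_sum_stern_mid by blast
  also have "\<dots> = (1 + x + x^2) * (\<Prod>i<n. 1 + x ^ (2^Suc i) + x ^ (2 * 2^Suc i))"
    using Suc by (simp add: power_mult[symmetric] mult.commute)
  also have "\<dots> = (\<Prod>i<Suc n. 1 + x ^ (2^i) + x ^ (2 * 2^i))"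
    by (simp add: prod.lessThan_Suc_shift mult_ac del: prod.lessThan_Suc)
  finally show ?case .
qed simp

theorem theorem1p1:
  fixes n :: nat and x :: "'a :: comm_ring_1"
  assumes "n \<ge> 1"
  shows "(\<Sum>k\<le>2^(n+1) - 2. of_nat (stern_a n k) * x ^ k)
           = (\<Prod>i<n. 1 + x ^ (2^i) + x ^ (2 * 2^i))"
proof -
  have range: "{..2^(n+1) - 2} = {0..<length (stern_row n)}"
    using Suc_length_stern_row[of n, symmetric] stern_row_hd_last[of n]
    by (cases "stern_row n") (auto simp: lessThan_Suc_atMost atLeast0LessThan)
  have "(\<Sum>k\<le>2^(n+1) - 2. of_nat (stern_a n k) * x ^ k)
      = (\<Sum>k = 0..<length (stern_row n). of_nat (stern_row n ! k) * x ^ k)"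
    unfolding range by (simp add: stern_a_def)
  also have "\<dots> = horner_sum of_nat x (stern_row n)"
    by (simp add: horner_sum_eq_sum)
  finally show ?thesis
    by (simp add: horner_sum_stern_row)
qed

end
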